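(* As formal power series in $z$ with integer coefficients, $$\Psi^2(z)=\frac{1}{1+z}\sum_{s\ge0}\ \sum_{k_1>k_2>\dots>k_s\ge0}3^s\prod_{j=1}^{s}\frac{z^{3^{k_j}}\bigl(1+z^{3^{k_j}}\bigr)}{1+z^{3^{k_j+1}}},$$ where the term for $s=0$ is interpreted as $1$. In particular $\Psi^2(z)\equiv \frac{1}{1+z}$ modulo $3$ (coefficientwise).
   Context: $\Psi(z)=\prod_{j\ge0}\bigl(1+z^{3^j}\bigr)=\sum_{k\ge0}\sum_{n_1>\dots>n_k\ge0}z^{3^{n_1}+\dots+3^{n_k}}$, a formal power series with coefficients in $\{0,1\}$. Rational functions such as $1/(1+z)$ are expanded as power series in $z$. For integral power series $f,g$, "$f=g$ modulo $3^e$" means all coefficients of $f-g$ are divisible by $3^e$. *)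

theory Defs
  imports "HOL-Computational_Algebra.Formal_Power_Series" "HOL-Analysis.Infinite_Sum"
begin

definition Psi :: "int fps" where
  "Psi = Abs_fps (\<lambda>n. if \<exists>K::nat set. finite K \<and> n = (\<Sum>j\<in>K. 3 ^ j) then 1 else 0)"

text \<open>Power series expansion of the rational function 1/(1+z^m), m >= 1:
  sum over i of (-1)^i z^(m i).\<close>
definition inv_1_plus_Xpow :: "nat \<Rightarrow> int fps" where
  "inv_1_plus_Xpow m = Abs_fps (\<lambda>n. if m dvd n then (-1) ^ (n div m) else 0)"

definition fac :: "nat \<Rightarrow> int fps" where
  "fac k = fps_X ^ (3 ^ k) * (1 + fps_X ^ (3 ^ k)) * inv_1_plus_Xpow (3 ^ (k + 1))"

end

theory Submission
  imports Defs
begin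

(* Write X = fps_X, P_N = Psi_trunc N = (1+X)(1+X^3)...(1+X^(3^(N-1))) for the
   truncations of Psi, and I_m = inv_1_plus_Xpow m for the expansion of 1/(1+X^m).
   (1) Since (1+y)^3 = (1+y^3) + 3y(1+y), every factor satisfies
         1 + 3 fac k = (1+X^(3^k))^3 * I_(3^(k+1)),
       so the product of these factors over k < N telescopes to (1+X) * P_N^2 * I_(3^N).
   (2) Expanding the same product gives the partial sum of the series over all K <= {..<N}:
         prod_(k<N) (1 + 3 fac k) = sum_(K <= {..<N}) 3^|K| prod_(k in K) fac k.
   (3) Modulo X^(3^N), P_N agrees with Psi and I_(3^N) with 1, so this partial sum agrees with
       T = (1+X) Psi^2 below degree 3^N.  The summand indexed by K vanishes below degree
       3^(max K), hence the series converges coefficientwise to T (has_sum over finite sets).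
   (4) A product of factors 1 + 3a is 1 modulo 3, so T = 1 mod 3 coefficientwise, and
       Psi^2 = I_1 * T is congruent to I_1 modulo 3.
   The file first proves general facts on divisibility of power series by X^n and by constants
   and on products of binomials, then the coefficient description of P_N, and finally carries
   out the steps (1)-(4); the theorem collects them. *)

unbundle fps_syntax


lemma fps_X_power_dvd_iff:
  fixes f :: "'a::comm_semiring_1 fps"
  shows "fps_X ^ n dvd f \<longleftrightarrow> (\<forall>i<n. f $ i = 0)"
proof
  assume "fps_X ^ n dvd f"
  then obtain g where "f = fps_X ^ n * g" by (elim dvdE)
  then show "\<forall>i<n. f $ i = 0" by (simp add: fps_X_power_mult_nth)
next
  assume "\<forall>i<n. f $ i = 0"
  then have "f = fps_X ^ n * fps_shift n f" by (intro fps_ext) (simp add: fps_X_power_mult_nth)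
  then show "fps_X ^ n dvd f" by (rule dvdI)
qed

lemma fps_X_power_dvd_diff_nth:
  fixes f g :: "'a::comm_ring_1 fps"
  assumes "fps_X ^ n dvd f - g" and "i < n"
  shows "f $ i = g $ i"
  using assms by (simp add: fps_X_power_dvd_iff)

lemma fps_const_dvd_iff:
  fixes f :: "'a::comm_semiring_1 fps"
  shows "fps_const c dvd f \<longleftrightarrow> (\<forall>n. c dvd f $ n)"
proof
  assume "fps_const c dvd f"
  then obtain g where "f = fps_const c * g" by (elim dvdE)
  then show "\<forall>n. c dvd f $ n" by simp
next
  assume "\<forall>n. c dvd f $ n"
  then have "\<forall>n. \<exists>k. f $ n = c * k" by (simp add: dvd_def)
  then obtain h where "\<And>n. f $ n = c * h n" by (metis choice)
  then have "f = fps_const c * Abs_fps h" by (intro fps_ext) simp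
  then show "fps_const c dvd f" by (rule dvdI)
qed

lemma one_plus_X_power_mult_nth:
  "((1 + fps_X ^ a) * (f :: 'a::comm_semiring_1 fps)) $ n
     = f $ n + (if a \<le> n then f $ (n - a) else 0)"
  by (simp add: distrib_right fps_X_power_mult_nth)


lemma inv_1_plus_Xpow_inverse:
  assumes "0 < m"
  shows "(1 + fps_X ^ m) * inv_1_plus_Xpow m = 1"
proof (rule fps_ext)
  fix n
  show "((1 + fps_X ^ m) * inv_1_plus_Xpow m) $ n = (1 :: int fps) $ n"
  proof (cases "m dvd n")
    case True
    then obtain q where q: "n = m * q" by blast
    show ?thesis
    proof (cases q)
      case 0
      then show ?thesis using q assms by (simp add: one_plus_X_power_mult_nth inv_1_plus_Xpow_def)
    next
      case (Suc r)
      then have "n - m = m * r" "m \<le> n" "n \<noteq> 0" using q assms by (simp_all add: algebra_simps)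
      then show ?thesis using assms q Suc by (simp add: one_plus_X_power_mult_nth inv_1_plus_Xpow_def)
    qed
  next
    case False
    have "\<not> m dvd n - m" if "m \<le> n" using False that by (simp add: dvd_minus_self)
    moreover have "n \<noteq> 0" using False by (metis dvd_0_right)
    ultimately show ?thesis using False by (simp add: one_plus_X_power_mult_nth inv_1_plus_Xpow_def)
  qed
qed

text \<open>Modulo X^m the series 1/(1+X^m) is 1, since 1/(1+X^m) - 1 = -X^m/(1+X^m).\<close>

lemma inv_1_plus_Xpow_congr_one:
  assumes "0 < m"
  shows "fps_X ^ m dvd inv_1_plus_Xpow m - 1"
proof -
  let ?I = "inv_1_plus_Xpow m"
  have "?I - 1 = ?I - (1 + fps_X ^ m) * ?I" using inv_1_plus_Xpow_inverse[OF assms] by simp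
  also have "\<dots> = fps_X ^ m * (- ?I)" by (simp add: algebra_simps)
  finally show ?thesis by (rule dvdI)
qed


lemma prod_one_plus_expand:
  fixes c :: "'b::comm_semiring_1" and a :: "'a \<Rightarrow> 'b"
  assumes "finite A"
  shows "(\<Prod>k\<in>A. 1 + c * a k) = (\<Sum>K\<in>Pow A. c ^ card K * (\<Prod>k\<in>K. a k))"
proof -
  have "(\<Prod>k\<in>A. 1 + c * a k) = (\<Prod>k\<in>A. c * a k + 1)" by (simp add: add.commute)
  also have "\<dots> = (\<Sum>K\<in>Pow A. (\<Prod>k\<in>K. c * a k) * (\<Prod>k\<in>A-K. 1))"
    by (rule prod_add) (rule assms)
  also have "\<dots> = (\<Sum>K\<in>Pow A. c ^ card K * (\<Prod>k\<in>K. a k))"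
    by (rule sum.cong) (auto simp: prod.distrib)
  finally show ?thesis .
qed

lemma dvd_prod_one_plus_minus_one:
  fixes c :: "'b::comm_ring_1" and a :: "'a \<Rightarrow> 'b"
  shows "c dvd (\<Prod>k\<in>A. 1 + c * a k) - 1"
proof (induction A rule: infinite_finite_induct)
  case (insert x F)
  let ?P = "\<Prod>k\<in>F. 1 + c * a k"
  have "(\<Prod>k\<in>insert x F. 1 + c * a k) - 1 = (?P - 1) + c * (a x * ?P)"
    using insert.hyps by (simp add: algebra_simps)
  also have "c dvd \<dots>" using insert.IH by (intro dvd_add dvd_triv_left)
  finally show ?case .
qed simp_all


definition Psi_trunc :: "nat \<Rightarrow> int fps" where
  "Psi_trunc N = (\<Prod>k<N. 1 + fps_X ^ (3 ^ k))"

definition pow3_subset_sum :: "nat \<Rightarrow> nat \<Rightarrow> bool" where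
  "pow3_subset_sum N m \<longleftrightarrow> (\<exists>K \<subseteq> {..<N}. m = (\<Sum>k\<in>K. 3 ^ k))"

lemma lt_pow3: "n < (3::nat) ^ n"
  by (induction n) auto

text \<open>Sums of distinct powers 3^k, k < N, stay below 3^N (as 1 + 2(1 + 3 + ... + 3^(N-1)) = 3^N).\<close>

lemma pow3_subset_sum_less:
  assumes "K \<subseteq> {..<N}"
  shows "(\<Sum>k\<in>K. (3::nat) ^ k) < 3 ^ N"
proof -
  have geom: "2 * (\<Sum>k<M. (3::nat) ^ k) + 1 = 3 ^ M" for M
    by (induction M) auto
  have "(\<Sum>k\<in>K. (3::nat) ^ k) \<le> (\<Sum>k<N. 3 ^ k)"
    by (rule sum_mono2) (use assms in auto)
  then show ?thesis using geom[of N] by linarith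
qed

lemma pow3_subset_sum_Suc:
  "pow3_subset_sum (Suc N) m \<longleftrightarrow>
     pow3_subset_sum N m \<or> (3 ^ N \<le> m \<and> pow3_subset_sum N (m - 3 ^ N))"
proof
  assume "pow3_subset_sum (Suc N) m"
  then obtain K where K: "K \<subseteq> {..<Suc N}" "m = (\<Sum>k\<in>K. 3 ^ k)"
    unfolding pow3_subset_sum_def by blast
  show "pow3_subset_sum N m \<or> (3 ^ N \<le> m \<and> pow3_subset_sum N (m - 3 ^ N))"
  proof (cases "N \<in> K")
    case True
    have "finite K" using K(1) by (rule finite_subset) simp
    then have "m = 3 ^ N + (\<Sum>k\<in>K - {N}. 3 ^ k)" using K(2) True by (simp add: sum.remove)
    moreover have "K - {N} \<subseteq> {..<N}" using K(1) by auto
    ultimately have "pow3_subset_sum N (m - 3 ^ N)" "3 ^ N \<le> m"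
      unfolding pow3_subset_sum_def by auto
    then show ?thesis by blast
  next
    case False
    have "K \<subseteq> {..<N}"
    proof
      fix k assume "k \<in> K"
      then have "k < Suc N" "k \<noteq> N" using K(1) False by auto
      then show "k \<in> {..<N}" by simp
    qed
    then show ?thesis using K(2) unfolding pow3_subset_sum_def by blast
  qed
next
  assume "pow3_subset_sum N m \<or> (3 ^ N \<le> m \<and> pow3_subset_sum N (m - 3 ^ N))"
  then show "pow3_subset_sum (Suc N) m"
  proof
    assume "pow3_subset_sum N m"
    then obtain K where K: "K \<subseteq> {..<N}" "m = (\<Sum>k\<in>K. 3 ^ k)"
      unfolding pow3_subset_sum_def by blast
    then have "K \<subseteq> {..<Suc N}" by auto
    with K(2) show ?thesis unfolding pow3_subset_sum_def by blast
  next
    assume m: "3 ^ N \<le> m \<and> pow3_subset_sum N (m - 3 ^ N)"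
    then obtain K where K: "K \<subseteq> {..<N}" "m - 3 ^ N = (\<Sum>k\<in>K. 3 ^ k)"
      unfolding pow3_subset_sum_def by blast
    have "finite K" using K(1) by (rule finite_subset) simp
    moreover have "N \<notin> K" using K(1) by auto
    ultimately have "(\<Sum>k\<in>insert N K. (3::nat) ^ k) = 3 ^ N + (m - 3 ^ N)" using K(2) by simp
    also have "\<dots> = m" using m by simp
    finally have "m = (\<Sum>k\<in>insert N K. 3 ^ k)" by (rule sym)
    moreover have "insert N K \<subseteq> {..<Suc N}" using K(1) by auto
    ultimately show ?thesis unfolding pow3_subset_sum_def by blast
  qed
qed

lemma Psi_trunc_nth: "Psi_trunc N $ m = (if pow3_subset_sum N m then 1 else 0)"
proof (induction N arbitrary: m)
  case 0
  then show ?case by (simp add: Psi_trunc_def pow3_subset_sum_def)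
next
  case (Suc N)
  have step: "Psi_trunc (Suc N) = (1 + fps_X ^ (3 ^ N)) * Psi_trunc N"
    by (simp add: Psi_trunc_def mult.commute)
  have "\<not> pow3_subset_sum N m" if "3 ^ N \<le> m"
  proof
    assume "pow3_subset_sum N m"
    then obtain K where "K \<subseteq> {..<N}" "m = (\<Sum>k\<in>K. 3 ^ k)"
      unfolding pow3_subset_sum_def by blast
    then show False using pow3_subset_sum_less[of K N] that by simp
  qed
  then show ?case
    unfolding step one_plus_X_power_mult_nth Suc pow3_subset_sum_Suc[of N m] by auto
qed

text \<open>Below degree 3^N the truncation P_N agrees with Psi: a finite set K of exponents with
  sum below 3^N consists of exponents below N.\<close>

lemma Psi_trunc_congr: "fps_X ^ (3 ^ N) dvd Psi - Psi_trunc N"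
proof -
  have "Psi $ m = Psi_trunc N $ m" if m: "m < 3 ^ N" for m
  proof -
    have "(\<exists>K. finite K \<and> m = (\<Sum>j\<in>K. 3 ^ j)) \<longleftrightarrow> pow3_subset_sum N m"
    proof
      assume "\<exists>K. finite K \<and> m = (\<Sum>j\<in>K. 3 ^ j)"
      then obtain K :: "nat set" where K: "finite K" "m = (\<Sum>j\<in>K. 3 ^ j)" by blast
      have "K \<subseteq> {..<N}"
      proof
        fix k assume "k \<in> K"
        then have "(3::nat) ^ k \<le> m" unfolding K(2) using K(1) by (intro member_le_sum) simp_all
        then have "(3::nat) ^ k < 3 ^ N" using m by linarith
        then show "k \<in> {..<N}" using power_less_imp_less_exp by fastforce
      qed
      then show "pow3_subset_sum N m" using K(2) unfolding pow3_subset_sum_def by blast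
    next
      assume "pow3_subset_sum N m"
      then obtain K where "K \<subseteq> {..<N}" "m = (\<Sum>k\<in>K. 3 ^ k)"
        unfolding pow3_subset_sum_def by blast
      moreover have "finite K" using \<open>K \<subseteq> {..<N}\<close> by (rule finite_subset) simp
      ultimately show "\<exists>K. finite K \<and> m = (\<Sum>j\<in>K. 3 ^ j)" by blast
    qed
    then show ?thesis by (simp add: Psi_def Psi_trunc_nth)
  qed
  then show ?thesis by (simp add: fps_X_power_dvd_iff)
qed


lemma one_plus_3_fac:
  "1 + 3 * fac k = (1 + fps_X ^ (3 ^ k)) ^ 3 * inv_1_plus_Xpow (3 ^ (k + 1))"
proof -
  let ?y = "fps_X ^ (3 ^ k) :: int fps" and ?I = "inv_1_plus_Xpow (3 ^ (k + 1))"
  have "fps_X ^ (3 ^ (k + 1)) = ?y ^ 3" by (simp add: power_mult[symmetric] mult.commute)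
  then have inv: "(1 + ?y ^ 3) * ?I = 1" using inv_1_plus_Xpow_inverse[of "3 ^ (k + 1)"] by simp
  have "(1 + ?y) ^ 3 * ?I = ((1 + ?y ^ 3) + 3 * ?y * (1 + ?y)) * ?I"
    by (simp add: power3_eq_cube algebra_simps)
  also have "\<dots> = 1 + 3 * fac k" using inv unfolding fac_def by (simp add: algebra_simps)
  finally show ?thesis by simp
qed

lemma prod_one_plus_3_fac:
  "(\<Prod>k<N. 1 + 3 * fac k) = (1 + fps_X) * Psi_trunc N ^ 2 * inv_1_plus_Xpow (3 ^ N)"
proof (induction N)
  case 0
  then show ?case using inv_1_plus_Xpow_inverse[of 1] by (simp add: Psi_trunc_def)
next
  case (Suc N)
  let ?y = "fps_X ^ (3 ^ N) :: int fps"
  have inv: "(1 + ?y) * inv_1_plus_Xpow (3 ^ N) = 1" by (rule inv_1_plus_Xpow_inverse) simp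
  have "(\<Prod>k<Suc N. 1 + 3 * fac k)
      = (1 + fps_X) * Psi_trunc N ^ 2 * inv_1_plus_Xpow (3 ^ N)
        * ((1 + ?y) ^ 3 * inv_1_plus_Xpow (3 ^ Suc N))"
    using Suc by (simp add: one_plus_3_fac)
  also have "\<dots> = (1 + fps_X) * (Psi_trunc N * (1 + ?y)) ^ 2 * inv_1_plus_Xpow (3 ^ Suc N)
                   * ((1 + ?y) * inv_1_plus_Xpow (3 ^ N))"
    by (simp add: power3_eq_cube power2_eq_square algebra_simps)
  also have "\<dots> = (1 + fps_X) * Psi_trunc (Suc N) ^ 2 * inv_1_plus_Xpow (3 ^ Suc N)"
    unfolding inv by (simp add: Psi_trunc_def)
  finally show ?case .
qed


definition summand :: "nat set \<Rightarrow> int fps" where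
  "summand K = 3 ^ card K * (\<Prod>k\<in>K. fac k)"

lemma sum_summand_Pow:
  "sum summand (Pow {..<N}) = (\<Prod>k<N. 1 + 3 * fac k)"
  unfolding summand_def by (simp add: prod_one_plus_expand)

lemma sum_summand_Pow_nth:
  assumes "j < 3 ^ N"
  shows "sum summand (Pow {..<N}) $ j = ((1 + fps_X) * Psi ^ 2) $ j"
proof -
  let ?P = "Psi_trunc N" and ?I = "inv_1_plus_Xpow (3 ^ N)" and ?d = "fps_X ^ (3 ^ N) :: int fps"
  have "sum summand (Pow {..<N}) - (1 + fps_X) * Psi ^ 2
          = (1 + fps_X) * (?P ^ 2 * (?I - 1) - (Psi - ?P) * (Psi + ?P))"
    unfolding sum_summand_Pow prod_one_plus_3_fac by (simp add: power2_eq_square algebra_simps)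
  moreover have "?d dvd ?P ^ 2 * (?I - 1) - (Psi - ?P) * (Psi + ?P)"
    using inv_1_plus_Xpow_congr_one[of "3 ^ N"] Psi_trunc_congr[of N] by (simp add: dvd_diff)
  ultimately have "?d dvd sum summand (Pow {..<N}) - (1 + fps_X) * Psi ^ 2" by simp
  then show ?thesis using assms by (rule fps_X_power_dvd_diff_nth)
qed

text \<open>The summand for K is divisible by X^(3^k) for every k in K; so only the sets
  K \<subseteq> {..j} contribute to the coefficient of degree j.\<close>

lemma summand_nth_eq_0:
  assumes "finite K" and "\<not> K \<subseteq> {..j}"
  shows "summand K $ j = 0"
proof -
  obtain k where k: "k \<in> K" "j < k" using assms(2) by (meson atMost_iff not_le subsetI)
  have "summand K = fps_X ^ (3 ^ k) * (3 ^ card K * ((1 + fps_X ^ (3 ^ k))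
                       * inv_1_plus_Xpow (3 ^ (k + 1))) * (\<Prod>k\<in>K - {k}. fac k))"
    unfolding summand_def using assms(1) k(1) by (simp add: prod.remove fac_def algebra_simps)
  moreover have "j < 3 ^ k" using k(2) lt_pow3[of k] by linarith
  ultimately show ?thesis by (simp add: fps_X_power_mult_nth)
qed

lemma sum_summand_nth:
  assumes "finite Y" and "Pow {..j} \<subseteq> Y" and "\<forall>K\<in>Y. finite K"
  shows "sum summand Y $ j = ((1 + fps_X) * Psi ^ 2) $ j"
proof -
  have "sum summand Y $ j = sum summand (Pow {..<Suc j}) $ j"
    unfolding fps_sum_nth lessThan_Suc_atMost
    by (rule sum.mono_neutral_right) (use assms summand_nth_eq_0 in auto)
  also have "\<dots> = ((1 + fps_X) * Psi ^ 2) $ j"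
    using lt_pow3[of "Suc j"] by (intro sum_summand_Pow_nth) simp
  finally show ?thesis .
qed

lemma summand_has_sum: "(summand has_sum ((1 + fps_X) * Psi ^ 2)) {K :: nat set. finite K}"
  unfolding has_sum_def
proof (rule tendsto_fpsI)
  fix j
  show "\<forall>\<^sub>F Y in finite_subsets_at_top {K. finite K}. sum summand Y $ j = ((1 + fps_X) * Psi ^ 2) $ j"
    unfolding eventually_finite_subsets_at_top
  proof (intro exI[of _ "Pow {..j}"] conjI allI impI)
    show "finite (Pow {..j})" and "Pow {..j} \<subseteq> {K. finite K}"
      by (auto intro: finite_subset[OF _ finite_atMost])
  qed (auto intro: sum_summand_nth)
qed

text \<open>Step (4): T = (1+X) Psi^2 is 1 modulo 3, since each coefficient is read off from a
  product of factors 1 + 3 fac k.\<close>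

lemma one_plus_X_times_Psi_square_mod_3: "fps_const 3 dvd (1 + fps_X) * Psi ^ 2 - 1"
  unfolding fps_const_dvd_iff
proof
  fix j
  let ?S = "\<Prod>k<Suc j. 1 + 3 * fac k"
  have "fps_const 3 dvd ?S - 1"
    using dvd_prod_one_plus_minus_one[of 3 fac "{..<Suc j}"] by (simp add: numeral_fps_const)
  then have "3 dvd (?S - 1) $ j" by (simp add: fps_const_dvd_iff)
  moreover have "?S $ j = ((1 + fps_X) * Psi ^ 2) $ j"
    using sum_summand_Pow_nth[of j "Suc j"] lt_pow3[of "Suc j"] by (simp add: sum_summand_Pow)
  ultimately show "3 dvd ((1 + fps_X) * Psi ^ 2 - 1) $ j" by simp
qed


theorem lemma2p1:
  shows "\<exists>T :: int fps.
           ((\<lambda>K. 3 ^ card K * (\<Prod>k\<in>K. fac k)) has_sum T) {K :: nat set. finite K}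
         \<and> Psi ^ 2 = inv_1_plus_Xpow 1 * T
         \<and> (\<forall>n. fps_nth (Psi ^ 2) n mod 3 = fps_nth (inv_1_plus_Xpow 1) n mod 3)"
proof (intro exI[of _ "(1 + fps_X) * Psi ^ 2"] conjI allI)
  let ?T = "(1 + fps_X) * Psi ^ 2" and ?I = "inv_1_plus_Xpow 1"
  show "((\<lambda>K. 3 ^ card K * (\<Prod>k\<in>K. fac k)) has_sum ?T) {K :: nat set. finite K}"
    using summand_has_sum unfolding summand_def .
  have inv: "?I * (1 + fps_X) = 1" using inv_1_plus_Xpow_inverse[of 1] by (simp add: mult.commute)
  have "?I * ?T = (?I * (1 + fps_X)) * Psi ^ 2" by (simp only: mult.assoc)
  then show eq: "Psi ^ 2 = ?I * ?T" by (simp only: inv mult_1_left)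
  fix n
  have "Psi ^ 2 - ?I = ?I * (?T - 1)" by (subst eq) (simp add: algebra_simps)
  then have "fps_const 3 dvd Psi ^ 2 - ?I" using one_plus_X_times_Psi_square_mod_3 by simp
  then have "3 dvd (Psi ^ 2) $ n - ?I $ n" by (simp add: fps_const_dvd_iff)
  then show "(Psi ^ 2) $ n mod 3 = ?I $ n mod 3" by (simp add: mod_eq_dvd_iff)
qed

end
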